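(* Let $(G,k,M^*,M)$ be a critical tuple. Then there exists a set $\mathcal{C}$ of directed cycles of $G_M$, each with $w_M(C)\le 0$, such that every $e\in E^+(C^+)$ is contained in some cycle of $\mathcal{C}$, and for every $C\in\mathcal{C}$, $C\cap C^+$ is a single path.
   Context: $R(H)$ is the set of red edges of an edge set $H$. For a perfect matching $M$ of a red/blue edge-colored bipartite graph $G=(A\sqcup B,E)$, $G_M$ is the directed graph on $A\sqcup B$ with edges of $M$ oriented from $A$ to $B$ and other edges from $B$ to $A$, weighted by $w_M(e)=0$ for blue $e$, $-1$ for red $e\in M$, $+1$ for red $e\notin M$; $E^+(H)$ (resp. $E^-(H)$) is the set of red edges of $H$ not in $M$ (resp. in $M$), $w_M(H)=|E^+(H)|-|E^-(H)|$. Cycles are identified with edge sets. For an edge $e$, $M^e$ is a perfect matching containing $e$ with the minimum number of red edges among those containing $e$. A tuple $(G,k,M^*,M)$ is critical if: every edge of $G$ lies in some perfect matching; $|R(M^* )|=k$; $|R(M)|<\frac13k$; every directed cycle $C$ of $G_M$ with $w_M(C)>0$ has $|E^+(C)|>\frac23k$; and $|R(M^e)|<\frac13k$ for every red $e\in M^*\setminus M$. $C^+$ is the unique positive-weight directed cycle of $G_M$ contained in $M\Delta M^*$. *)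

theory Defs
  imports Complex_Main
begin

text \<open>A red/blue edge-coloured simple bipartite graph G = (A \<squnion> B, E): edges are pairs (a,b)
  with a \<in> A, b \<in> B; the set R of red edges is a subset of E, all other edges are blue.\<close>

definition bip_graph :: "'v set \<Rightarrow> 'v set \<Rightarrow> ('v \<times> 'v) set \<Rightarrow> ('v \<times> 'v) set \<Rightarrow> bool" where
  "bip_graph A B E R \<longleftrightarrow> finite A \<and> finite B \<and> A \<inter> B = {} \<and> E \<subseteq> A \<times> B \<and> R \<subseteq> E"

definition perfect_matching :: "'v set \<Rightarrow> 'v set \<Rightarrow> ('v \<times> 'v) set \<Rightarrow> ('v \<times> 'v) set \<Rightarrow> bool" where
  "perfect_matching A B E M \<longleftrightarrow> M \<subseteq> E \<and> (\<forall>a\<in>A. \<exists>!b. (a, b) \<in> M) \<and> (\<forall>b\<in>B. \<exists>!a. (a, b) \<in> M)"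

definition arcM :: "('v \<times> 'v) set \<Rightarrow> ('v \<times> 'v) set \<Rightarrow> 'v \<Rightarrow> 'v \<Rightarrow> bool" where
  "arcM E M u v \<longleftrightarrow> (u, v) \<in> M \<or> ((v, u) \<in> E \<and> (v, u) \<notin> M)"

definition und :: "('v \<times> 'v) set \<Rightarrow> 'v \<Rightarrow> 'v \<Rightarrow> 'v \<times> 'v" where
  "und M u v = (if (u, v) \<in> M then (u, v) else (v, u))"

definition dcycle :: "('v \<times> 'v) set \<Rightarrow> ('v \<times> 'v) set \<Rightarrow> ('v \<times> 'v) set \<Rightarrow> bool" where
  "dcycle E M C \<longleftrightarrow> (\<exists>vs. length vs \<ge> 2 \<and> distinct vs \<and>
     (\<forall>i < length vs. arcM E M (vs ! i) (vs ! ((i + 1) mod length vs))) \<and>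
     C = {und M (vs ! i) (vs ! ((i + 1) mod length vs)) | i. i < length vs})"

definition dpath :: "('v \<times> 'v) set \<Rightarrow> ('v \<times> 'v) set \<Rightarrow> ('v \<times> 'v) set \<Rightarrow> bool" where
  "dpath E M P \<longleftrightarrow> (\<exists>vs. length vs \<ge> 2 \<and> distinct vs \<and>
     (\<forall>i. i + 1 < length vs \<longrightarrow> arcM E M (vs ! i) (vs ! (i + 1))) \<and>
     P = {und M (vs ! i) (vs ! (i + 1)) | i. i + 1 < length vs})"

definition Eplus :: "('v \<times> 'v) set \<Rightarrow> ('v \<times> 'v) set \<Rightarrow> ('v \<times> 'v) set \<Rightarrow> ('v \<times> 'v) set" where
  "Eplus R M H = (H \<inter> R) - M"

definition Eminus :: "('v \<times> 'v) set \<Rightarrow> ('v \<times> 'v) set \<Rightarrow> ('v \<times> 'v) set \<Rightarrow> ('v \<times> 'v) set" where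
  "Eminus R M H = H \<inter> R \<inter> M"

definition wM :: "('v \<times> 'v) set \<Rightarrow> ('v \<times> 'v) set \<Rightarrow> ('v \<times> 'v) set \<Rightarrow> int" where
  "wM R M H = int (card (Eplus R M H)) - int (card (Eminus R M H))"

definition min_red :: "'v set \<Rightarrow> 'v set \<Rightarrow> ('v \<times> 'v) set \<Rightarrow> ('v \<times> 'v) set \<Rightarrow> 'v \<times> 'v \<Rightarrow> nat" where
  "min_red A B E R e = Min {card (M' \<inter> R) | M'. perfect_matching A B E M' \<and> e \<in> M'}"

definition critical :: "'v set \<Rightarrow> 'v set \<Rightarrow> ('v \<times> 'v) set \<Rightarrow> ('v \<times> 'v) set \<Rightarrow> nat
    \<Rightarrow> ('v \<times> 'v) set \<Rightarrow> ('v \<times> 'v) set \<Rightarrow> bool" where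
  "critical A B E R k Mstar M \<longleftrightarrow>
     bip_graph A B E R \<and> perfect_matching A B E Mstar \<and> perfect_matching A B E M \<and>
     (\<forall>e\<in>E. \<exists>M'. perfect_matching A B E M' \<and> e \<in> M') \<and>
     card (Mstar \<inter> R) = k \<and>
     real (card (M \<inter> R)) < real k / 3 \<and>
     (\<forall>C. dcycle E M C \<and> wM R M C > 0 \<longrightarrow> real (card (Eplus R M C)) > 2 * real k / 3) \<and>
     (\<forall>e \<in> (Mstar - M) \<inter> R. real (min_red A B E R e) < real k / 3)"

end

theory Submission
  imports Defs "HOL-Combinatorics.Cycles"
begin

(* Fix e = (h, t) in E^+(C^+). The perfect matching M^e differs from M by M-alternating cycles,
   and the one through e is a directed cycle C of G_M with |E^+(C)| <= |R(M^e)| < k/3, so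
   w_M(C) <= 0 by criticality. Follow C from h until it first leaves C^+ (at x) and first
   returns to it (at y). The cycle D that runs along C^+ from y through e to x and back along C
   meets C^+ in a single path. If w_M(D) > 0, then |E^+(D)| > 2k/3; the cycle Z that runs along
   C^+ from h to y and then along C to t satisfies Z \<union> D \<subseteq> C \<union> C^+ and Z \<inter> D \<subseteq> C \<inter> C^+, so
   |E^+(Z)| + |E^+(D)| <= |E^+(C)| + |E^+(C^+)| < k/3 + k. Hence |E^+(Z)| < 2k/3, so w_M(Z) <= 0,
   and Z has fewer arcs outside C^+ than C: induction on that number. *)

section \<open>Walks and cycles as vertex lists\<close>

fun walk_arcs :: "'a list \<Rightarrow> ('a \<times> 'a) set" where
  "walk_arcs (x # y # zs) = insert (x, y) (walk_arcs (y # zs))"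
| "walk_arcs _ = {}"

lemma walk_arcs_eq_set_zip: "walk_arcs xs = set (zip xs (tl xs))"
  by (induction xs rule: walk_arcs.induct) auto

lemma walk_arcs_conv_nth: "walk_arcs xs = {(xs ! i, xs ! Suc i) | i. Suc i < length xs}"
  by (auto simp: walk_arcs_eq_set_zip set_zip nth_tl)

lemma finite_walk_arcs [simp]: "finite (walk_arcs xs)"
  by (simp add: walk_arcs_eq_set_zip)

lemma walk_arcs_Cons: "ys \<noteq> [] \<Longrightarrow> walk_arcs (x # ys) = insert (x, hd ys) (walk_arcs ys)"
  by (cases ys) auto

lemma walk_arcs_append: "walk_arcs (xs @ y # zs) = walk_arcs (xs @ [y]) \<union> walk_arcs (y # zs)"
  by (induction xs rule: walk_arcs.induct) auto

lemma walk_arcs_append_nonempty: "ys \<noteq> [] \<Longrightarrow> walk_arcs (xs @ ys) = walk_arcs (xs @ [hd ys]) \<union> walk_arcs ys"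
  using walk_arcs_append[of xs "hd ys" "tl ys"] by (cases ys) auto

lemma walk_arcs_snoc: "xs \<noteq> [] \<Longrightarrow> walk_arcs (xs @ [y]) = insert (last xs, y) (walk_arcs xs)"
  by (induction xs rule: walk_arcs.induct) auto

lemma walk_arcs_Cons_subset: "walk_arcs ys \<subseteq> walk_arcs (x # ys)"
  by (cases ys) auto

lemma walk_arcs_append_subset: "walk_arcs xs \<union> walk_arcs ys \<subseteq> walk_arcs (xs @ ys)"
  by (induction xs rule: walk_arcs.induct) (auto intro: walk_arcs_Cons_subset[THEN subsetD])

lemma walk_arcs_take_subset: "walk_arcs (take n xs) \<subseteq> walk_arcs xs"
  using walk_arcs_append_subset[of "take n xs" "drop n xs"] by simp

lemma walk_arcs_fst_in_butlast: "(u, v) \<in> walk_arcs xs \<Longrightarrow> u \<in> set (butlast xs)"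
  by (induction xs rule: walk_arcs.induct) auto

lemma walk_arcs_in_set: "(u, v) \<in> walk_arcs xs \<Longrightarrow> u \<in> set xs \<and> v \<in> set xs"
  by (auto simp: walk_arcs_conv_nth)

lemma walk_arcs_disjoint:
  "set (butlast xs) \<inter> set (butlast ys) = {} \<Longrightarrow> walk_arcs xs \<inter> walk_arcs ys = {}"
  by (auto dest: walk_arcs_fst_in_butlast)

lemma distinct_walk_within:
  assumes "xs \<noteq> []"
  obtains ys where "distinct ys" "ys \<noteq> []" "hd ys = hd xs" "last ys = last xs"
    "walk_arcs ys \<subseteq> walk_arcs xs"
proof -
  have "\<exists>ys. distinct ys \<and> ys \<noteq> [] \<and> hd ys = hd xs \<and> last ys = last xs \<and> walk_arcs ys \<subseteq> walk_arcs xs"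
    using assms
  proof (induction "length xs" arbitrary: xs rule: less_induct)
    case less
    show ?case
    proof (cases "distinct xs")
      case True
      with less.prems show ?thesis by blast
    next
      case False
      then obtain as y bs cs where xs: "xs = as @ [y] @ bs @ [y] @ cs"
        using not_distinct_decomp by blast
      let ?ys = "as @ y # cs"
      have "walk_arcs (y # cs) \<subseteq> walk_arcs (y # bs @ y # cs)"
        using walk_arcs_append[of "y # bs" y cs] by auto
      then have sub: "walk_arcs ?ys \<subseteq> walk_arcs xs"
        using xs walk_arcs_append[of as y cs] walk_arcs_append[of as y "bs @ y # cs"] by auto
      have ends: "hd ?ys = hd xs" "last ?ys = last xs"
        using xs by (cases as; simp)+
      have "length ?ys < length xs"
        using xs by simp
      with less.hyps obtain zs where "distinct zs" "zs \<noteq> []" "hd zs = hd ?ys" "last zs = last ?ys"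
        "walk_arcs zs \<subseteq> walk_arcs ?ys"
        by blast
      with sub ends show ?thesis
        by auto
    qed
  qed
  with that show thesis
    by blast
qed

lemma walk_arcs_first_outside:
  assumes "\<not> walk_arcs p \<subseteq> S"
  obtains p1 x p2 where "p = p1 @ x # p2" "p2 \<noteq> []" "walk_arcs (p1 @ [x]) \<subseteq> S" "(x, hd p2) \<notin> S"
proof -
  have "\<exists>p1 x p2. p = p1 @ x # p2 \<and> p2 \<noteq> [] \<and> walk_arcs (p1 @ [x]) \<subseteq> S \<and> (x, hd p2) \<notin> S"
    using assms
  proof (induction p rule: walk_arcs.induct)
    case (1 u v zs)
    show ?case
    proof (cases "(u, v) \<in> S")
      case True
      with "1.prems" obtain p1 x p2 where p: "v # zs = p1 @ x # p2" "p2 \<noteq> []"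
        "walk_arcs (p1 @ [x]) \<subseteq> S" "(x, hd p2) \<notin> S"
        using "1.IH" by auto
      have "walk_arcs ((u # p1) @ [x]) \<subseteq> S"
        using True p(1,3) by (cases p1) auto
      with p(1,2,4) show ?thesis
        by (intro exI[of _ "u # p1"] exI[of _ x] exI[of _ p2]) simp
    next
      case False
      then show ?thesis
        by (intro exI[of _ "[]"] exI[of _ u] exI[of _ "v # zs"]) simp
    qed
  qed auto
  with that show thesis
    by blast
qed

definition cycle_arcs :: "'a list \<Rightarrow> ('a \<times> 'a) set" where
  "cycle_arcs vs = walk_arcs (vs @ [hd vs])"

lemma cycle_arcs_eq_insert: "vs \<noteq> [] \<Longrightarrow> cycle_arcs vs = insert (last vs, hd vs) (walk_arcs vs)"
  by (simp add: cycle_arcs_def walk_arcs_snoc)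

lemma cycle_arcs_mono:
  "walk_arcs xs \<subseteq> walk_arcs ys \<Longrightarrow> xs \<noteq> [] \<Longrightarrow> ys \<noteq> [] \<Longrightarrow> hd xs = hd ys \<Longrightarrow> last xs = last ys
    \<Longrightarrow> cycle_arcs xs \<subseteq> cycle_arcs ys"
  by (auto simp: cycle_arcs_eq_insert)

lemma cycle_arcs_conv_nth:
  assumes "vs \<noteq> []"
  shows "cycle_arcs vs = {(vs ! i, vs ! ((i + 1) mod length vs)) | i. i < length vs}"
proof -
  have "(vs @ [hd vs]) ! Suc i = vs ! ((i + 1) mod length vs)" if "i < length vs" for i
  proof (cases "Suc i < length vs")
    case False
    with that have "Suc i = length vs"
      by simp
    with assms show ?thesis
      by (simp add: nth_append hd_conv_nth)
  qed (simp add: nth_append)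
  then show ?thesis
    unfolding cycle_arcs_def walk_arcs_conv_nth by (fastforce simp: nth_append)
qed

lemma cycle_arcs_nth_iff:
  assumes "distinct vs" "i < length vs" "j < length vs"
  shows "(vs ! i, vs ! j) \<in> cycle_arcs vs \<longleftrightarrow> j = (i + 1) mod length vs"
proof -
  have "vs \<noteq> []"
    using assms(2) by auto
  with assms show ?thesis
    by (auto simp: cycle_arcs_conv_nth nth_eq_iff_index_eq)
qed

lemma cycle_arcs_in_set: "(u, v) \<in> cycle_arcs vs \<Longrightarrow> u \<in> set vs \<and> v \<in> set vs"
  by (cases vs) (auto simp: cycle_arcs_def dest: walk_arcs_in_set)

lemma cycle_arcs_successor:
  assumes "distinct vs" "i < length vs" "(vs ! i, v) \<in> cycle_arcs vs"
  shows "v = vs ! ((i + 1) mod length vs)"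
proof -
  obtain j where j: "j < length vs" "v = vs ! j"
    using cycle_arcs_in_set[OF assms(3)] by (metis in_set_conv_nth)
  with assms(3) show ?thesis
    using cycle_arcs_nth_iff[OF assms(1,2) j(1)] by simp
qed

lemma cycle_arcs_rotate1: "cycle_arcs (rotate1 vs) = cycle_arcs vs"
proof (cases vs)
  case (Cons x xs)
  then show ?thesis
    by (cases "xs = []") (auto simp: cycle_arcs_eq_insert walk_arcs_snoc walk_arcs_Cons)
qed simp

lemma cycle_arcs_rotate: "cycle_arcs (rotate n vs) = cycle_arcs vs"
  by (induction n) (simp_all add: cycle_arcs_rotate1)

lemma rotate_cycle_to:
  assumes "distinct vs" "v \<in> set vs"
  obtains ws where "distinct ws" "length ws = length vs" "hd ws = v" "cycle_arcs ws = cycle_arcs vs"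
proof -
  obtain i where "i < length vs" "vs ! i = v"
    using assms(2) by (meson in_set_conv_nth)
  then have "hd (rotate i vs) = v"
    by (subst hd_rotate_conv_nth) auto
  with assms(1) show thesis
    using that[of "rotate i vs"] by (simp add: cycle_arcs_rotate)
qed

lemma distinct_walk_in_cycle_prefix:
  assumes "distinct vs" "vs \<noteq> []"
  shows "distinct xs \<Longrightarrow> xs \<noteq> [] \<Longrightarrow> hd xs = hd vs \<Longrightarrow> walk_arcs xs \<subseteq> cycle_arcs vs
    \<Longrightarrow> xs = take (length xs) vs"
proof (induction xs rule: rev_induct)
  case (snoc v xs)
  show ?case
  proof (cases "xs = []")
    case True
    with snoc.prems assms(2) show ?thesis by (cases vs) auto
  next
    case False
    define n where "n = length xs"
    have xs: "xs = take n vs"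
      using snoc False by (simp add: n_def walk_arcs_snoc)
    have "0 < n" "n \<le> length vs"
      using False arg_cong[OF xs, of length] by (auto simp: n_def)
    have "last xs = xs ! (n - 1)"
      using False by (simp add: last_conv_nth n_def)
    also have "\<dots> = vs ! (n - 1)"
      using \<open>0 < n\<close> by (subst xs) simp
    finally have "(vs ! (n - 1), v) \<in> cycle_arcs vs"
      using snoc.prems(4) False by (simp add: walk_arcs_snoc)
    then have v: "v = vs ! (n mod length vs)"
      using cycle_arcs_successor[OF assms(1), of "n - 1" v] \<open>0 < n\<close> \<open>n \<le> length vs\<close> by simp
    show ?thesis
    proof (cases "n < length vs")
      case True
      with xs v have "take (Suc n) vs = xs @ [v]"
        by (simp add: take_Suc_conv_app_nth)
      then show ?thesis
        by (simp add: n_def)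
    next
      case False
      then have "v = hd xs"
        using v \<open>n \<le> length vs\<close> snoc.prems(3) assms(2) \<open>xs \<noteq> []\<close>
        by (simp add: hd_conv_nth nth_append)
      moreover have "hd xs \<in> set xs"
        using \<open>xs \<noteq> []\<close> by simp
      ultimately show ?thesis
        using snoc.prems(1) by simp
    qed
  qed
qed simp

lemma distinct_walk_in_cycle_eq:
  assumes "distinct vs" "vs \<noteq> []" "distinct xs" "xs \<noteq> []" "hd xs = hd vs" "last xs = last vs"
    "walk_arcs xs \<subseteq> cycle_arcs vs"
  shows "xs = vs"
proof -
  define n where "n = length xs"
  have xs: "xs = take n vs"
    using distinct_walk_in_cycle_prefix assms n_def by blast
  have "0 < n" "n \<le> length vs"
    using assms(4) arg_cong[OF xs, of length] by (auto simp: n_def)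
  have "vs ! (n - 1) = xs ! (n - 1)"
    using \<open>0 < n\<close> by (subst xs) simp
  also have "\<dots> = last xs"
    using assms(4) by (simp add: last_conv_nth n_def)
  also have "\<dots> = vs ! (length vs - 1)"
    using assms(2,6) by (simp add: last_conv_nth)
  finally have "n - 1 = length vs - 1"
    using \<open>0 < n\<close> \<open>n \<le> length vs\<close> assms(1) by (simp add: nth_eq_iff_index_eq)
  then have "n = length vs"
    using \<open>0 < n\<close> \<open>n \<le> length vs\<close> by arith
  with xs show ?thesis
    by simp
qed

lemma cycle_arcs_into_hd:
  assumes "distinct vs" "(u, hd vs) \<in> cycle_arcs vs"
  shows "u = last vs"
proof -
  have "vs \<noteq> []" "u \<in> set vs"
    using cycle_arcs_in_set[OF assms(2)] by auto
  then obtain i where i: "i < length vs" "u = vs ! i"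
    by (metis in_set_conv_nth)
  then have "0 = (i + 1) mod length vs"
    using assms \<open>vs \<noteq> []\<close> cycle_arcs_nth_iff[of vs i 0] by (simp add: hd_conv_nth)
  then have "i = length vs - 1"
    using i(1) by (cases "i + 1 < length vs") auto
  with i \<open>vs \<noteq> []\<close> show ?thesis
    by (simp add: last_conv_nth)
qed

lemma length_ge_2_if_hd_neq_last: "xs \<noteq> [] \<Longrightarrow> hd xs \<noteq> last xs \<Longrightarrow> 2 \<le> length xs"
  by (cases xs; cases "tl xs") auto

lemma walk_arcs_take_in_cycle: "walk_arcs (take n vs) \<subseteq> cycle_arcs vs"
  using walk_arcs_take_subset[of n vs] walk_arcs_append_subset[of vs "[hd vs]"] by (auto simp: cycle_arcs_def)

section \<open>Detours from a cycle\<close>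

definition detour_cycle :: "'a list \<Rightarrow> nat \<Rightarrow> nat \<Rightarrow> 'a list \<Rightarrow> 'a list" where
  "detour_cycle g a b q = drop b g @ take (Suc a) g @ q"

definition shortcut :: "'a list \<Rightarrow> nat \<Rightarrow> 'a list \<Rightarrow> 'a list" where
  "shortcut g b p3 = take (Suc b) g @ p3"

(* The walk p follows g up to g ! a, leaves g through the vertices q, and returns at g ! b;
   p3 is the rest of p. The detour cycle runs along g from g ! b around to g ! a and back through
   q; the shortcut runs along g up to g ! b and then along p. *)
locale detour =
  fixes g p :: "'a list" and a b :: nat and q p3 :: "'a list"
  assumes distinct_g: "distinct g" and distinct_p: "distinct p"
    and last_p: "last p = last g"
    and p_split: "p = take (Suc a) g @ q @ g ! b # p3"
    and a_less_b: "a < b" and b_less_length: "b < length g"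
    and q_off_cycle: "set q \<inter> set g = {}"
    and leaves_cycle: "(g ! a, hd (q @ [g ! b])) \<notin> cycle_arcs g"
begin

lemma g_nonempty: "g \<noteq> []"
  using b_less_length by auto

lemma take_Suc_a: "take (Suc a) g = take a g @ [g ! a]"
  using a_less_b b_less_length by (simp add: take_Suc_conv_app_nth)

lemma hd_take_Suc_a: "hd (take (Suc a) g) = hd g"
  using g_nonempty by (cases g) auto

lemma p_ends: "p \<noteq> []" "hd p = hd g"
  using p_split hd_take_Suc_a g_nonempty by (simp_all add: hd_append)

lemma cycle_arcs_p: "cycle_arcs p = insert (last g, hd g) (walk_arcs p)"
  using p_ends last_p by (simp add: cycle_arcs_eq_insert)

lemma walk_arcs_p:
  "walk_arcs p = walk_arcs (take (Suc a) g) \<union> walk_arcs (g ! a # q @ [g ! b]) \<union> walk_arcs (g ! b # p3)"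
proof -
  have "p = take a g @ g ! a # (q @ g ! b # p3)"
    using p_split take_Suc_a by simp
  then have "walk_arcs p = walk_arcs (take (Suc a) g) \<union> walk_arcs (g ! a # q @ g ! b # p3)"
    using walk_arcs_append[of "take a g" "g ! a" "q @ g ! b # p3"] take_Suc_a by simp
  also have "walk_arcs (g ! a # q @ g ! b # p3) = walk_arcs (g ! a # q @ [g ! b]) \<union> walk_arcs (g ! b # p3)"
    using walk_arcs_append[of "g ! a # q" "g ! b" p3] by simp
  finally show ?thesis
    by blast
qed

lemma cycle_arcs_g: "cycle_arcs g = walk_arcs (take (Suc b) g) \<union> walk_arcs (drop b g @ [hd g])"
proof -
  have "g @ [hd g] = take b g @ g ! b # (drop (Suc b) g @ [hd g])"
    using arg_cong[OF id_take_nth_drop[OF b_less_length], of "\<lambda>xs. xs @ [hd g]"] by simp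
  then have "cycle_arcs g = walk_arcs (take b g @ [g ! b]) \<union> walk_arcs (g ! b # drop (Suc b) g @ [hd g])"
    unfolding cycle_arcs_def by (metis walk_arcs_append)
  then show ?thesis
    using b_less_length by (simp add: take_Suc_conv_app_nth Cons_nth_drop_Suc[OF b_less_length, symmetric])
qed

lemma cycle_arcs_detour_cycle:
  "cycle_arcs (detour_cycle g a b q) =
    walk_arcs (drop b g @ [hd g]) \<union> walk_arcs (take (Suc a) g) \<union> walk_arcs (g ! a # q @ [g ! b])"
proof -
  have "hd (detour_cycle g a b q) = g ! b"
    using b_less_length by (simp add: detour_cycle_def hd_drop_conv_nth)
  then have "cycle_arcs (detour_cycle g a b q) = walk_arcs (drop b g @ take (Suc a) g @ q @ [g ! b])"
    by (simp add: cycle_arcs_def detour_cycle_def)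
  also have "\<dots> = walk_arcs (drop b g @ [hd g]) \<union> walk_arcs (take (Suc a) g @ q @ [g ! b])"
    using walk_arcs_append_nonempty[of "take (Suc a) g @ q @ [g ! b]" "drop b g"] hd_take_Suc_a g_nonempty
    by simp
  also have "walk_arcs (take (Suc a) g @ q @ [g ! b]) = walk_arcs (take (Suc a) g) \<union> walk_arcs (g ! a # q @ [g ! b])"
    using take_Suc_a walk_arcs_append[of "take a g" "g ! a" "q @ [g ! b]"] by simp
  finally show ?thesis
    by blast
qed

lemma walk_arcs_shortcut: "walk_arcs (shortcut g b p3) = walk_arcs (take (Suc b) g) \<union> walk_arcs (g ! b # p3)"
  using walk_arcs_append[of "take b g" "g ! b" p3] b_less_length
  by (simp add: shortcut_def take_Suc_conv_app_nth)

lemma excursion_off_cycle: "walk_arcs (g ! a # q @ [g ! b]) \<inter> cycle_arcs g = {}"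
proof -
  have "walk_arcs (q @ [g ! b]) \<inter> cycle_arcs g = {}"
    unfolding cycle_arcs_def using q_off_cycle by (intro walk_arcs_disjoint) simp
  then show ?thesis
    using leaves_cycle by (simp add: walk_arcs_Cons)
qed

lemma cycle_segments_disjoint: "walk_arcs (take (Suc b) g) \<inter> walk_arcs (drop b g @ [hd g]) = {}"
  using set_take_disj_set_drop_if_distinct[OF distinct_g, of b b] b_less_length
  by (intro walk_arcs_disjoint) (simp add: butlast_take)

lemma excursion_rest_disjoint: "walk_arcs (g ! a # q @ [g ! b]) \<inter> walk_arcs (g ! b # p3) = {}"
proof -
  have "set (g ! a # q) \<inter> set (g ! b # p3) = {}"
    using distinct_p p_split take_Suc_a by auto
  then show ?thesis
    by (intro walk_arcs_disjoint) (auto simp: butlast_append dest: in_set_butlastD)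
qed

lemma distinct_detour_cycle: "distinct (detour_cycle g a b q)"
proof -
  have "set (take (Suc a) g) \<inter> set (drop b g) = {}"
    using set_take_disj_set_drop_if_distinct[OF distinct_g, of "Suc a" b] a_less_b by simp
  moreover have "distinct q"
    using distinct_p p_split by simp
  ultimately show ?thesis
    using distinct_g q_off_cycle set_take_subset[of "Suc a" g] set_drop_subset[of b g]
    by (auto simp: detour_cycle_def)
qed

lemma length_drop_take_ge_2: "2 \<le> length (drop b g @ take (Suc a) g)"
  using b_less_length by simp

lemma closing_arc_in_detour_cycle: "(last g, hd g) \<in> cycle_arcs (detour_cycle g a b q)"
  using b_less_length by (simp add: cycle_arcs_detour_cycle walk_arcs_snoc)

lemma detour_cycle_Int_cycle:
  "cycle_arcs (detour_cycle g a b q) \<inter> cycle_arcs g = walk_arcs (drop b g @ take (Suc a) g)"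
proof -
  have "walk_arcs (take (Suc a) g) \<subseteq> cycle_arcs g"
    by (rule walk_arcs_take_in_cycle)
  moreover have "walk_arcs (drop b g @ take (Suc a) g) = walk_arcs (drop b g @ [hd g]) \<union> walk_arcs (take (Suc a) g)"
    using walk_arcs_append_nonempty[of "take (Suc a) g" "drop b g"] hd_take_Suc_a g_nonempty by simp
  ultimately show ?thesis
    using cycle_arcs_detour_cycle cycle_arcs_g excursion_off_cycle by blast
qed

lemma shortcut_ends: "shortcut g b p3 \<noteq> []" "hd (shortcut g b p3) = hd g" "last (shortcut g b p3) = last g"
proof -
  show "shortcut g b p3 \<noteq> []" "hd (shortcut g b p3) = hd g"
    using g_nonempty by (cases g; simp add: shortcut_def)+
  have "last p = (if p3 = [] then g ! b else last p3)"
    using p_split by simp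
  then show "last (shortcut g b p3) = last g"
    using last_p b_less_length by (simp add: shortcut_def take_Suc_conv_app_nth split: if_splits)
qed

lemma cycle_arcs_shortcut: "cycle_arcs (shortcut g b p3) = insert (last g, hd g) (walk_arcs (shortcut g b p3))"
  using shortcut_ends by (simp add: cycle_arcs_eq_insert)

lemma cycle_arcs_p_subset: "cycle_arcs p \<subseteq> cycle_arcs g \<union> walk_arcs p"
  using cycle_arcs_p g_nonempty by (auto simp: cycle_arcs_eq_insert)

lemma
  shows detour_cycle_subset: "cycle_arcs (detour_cycle g a b q) \<subseteq> cycle_arcs g \<union> walk_arcs p"
    and shortcut_subset: "walk_arcs (shortcut g b p3) \<subseteq> cycle_arcs g \<union> walk_arcs p"
  using cycle_arcs_detour_cycle walk_arcs_shortcut walk_arcs_p cycle_arcs_g by auto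

lemma uncross_Un:
  "cycle_arcs (shortcut g b p3) \<union> cycle_arcs (detour_cycle g a b q) \<subseteq> cycle_arcs p \<union> cycle_arcs g"
  using cycle_arcs_shortcut cycle_arcs_p detour_cycle_subset shortcut_subset by auto

lemma uncross_Int:
  "cycle_arcs (shortcut g b p3) \<inter> cycle_arcs (detour_cycle g a b q) \<subseteq> cycle_arcs p \<inter> cycle_arcs g"
proof -
  have "(last g, hd g) \<in> cycle_arcs g"
    using g_nonempty by (simp add: cycle_arcs_eq_insert)
  then show ?thesis
    using walk_arcs_take_in_cycle[of "Suc a" g] cycle_arcs_g walk_arcs_p cycle_segments_disjoint excursion_rest_disjoint
    unfolding cycle_arcs_shortcut cycle_arcs_p walk_arcs_shortcut cycle_arcs_detour_cycle by blast
qed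

lemma shortcut_fewer_arcs_off_cycle:
  "walk_arcs (shortcut g b p3) - cycle_arcs g \<subset> walk_arcs p - cycle_arcs g"
proof -
  have "(g ! a, hd (q @ [g ! b])) \<in> walk_arcs (g ! a # q @ [g ! b])"
    by (simp add: walk_arcs_Cons)
  then show ?thesis
    using walk_arcs_shortcut walk_arcs_p cycle_arcs_g leaves_cycle excursion_rest_disjoint by blast
qed

end

lemma walk_leaves_cycle_after_prefix:
  assumes "distinct g" "g \<noteq> []" "distinct p" "hd p = hd g" "\<not> walk_arcs p \<subseteq> cycle_arcs g"
  obtains a p2 where "a < length g" "p = take (Suc a) g @ p2" "p2 \<noteq> []" "(g ! a, hd p2) \<notin> cycle_arcs g"
proof -
  obtain p1 x p2 where p: "p = p1 @ x # p2" "p2 \<noteq> []" "walk_arcs (p1 @ [x]) \<subseteq> cycle_arcs g"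
    "(x, hd p2) \<notin> cycle_arcs g"
    using walk_arcs_first_outside[OF assms(5)] by blast
  define a where "a = length p1"
  have "hd (p1 @ [x]) = hd g"
    using p(1) assms(4) by (cases p1) auto
  moreover have "distinct (p1 @ [x])"
    using assms(3) p(1) by simp
  ultimately have "p1 @ [x] = take (length (p1 @ [x])) g"
    using distinct_walk_in_cycle_prefix[OF assms(1,2)] p(3) by blast
  then have pre: "p1 @ [x] = take (Suc a) g"
    by (simp add: a_def)
  have "length (p1 @ [x]) = length (take (Suc a) g)"
    by (simp only: pre)
  then have "a < length g"
    by (simp add: a_def)
  moreover have "x = (p1 @ [x]) ! a"
    by (simp add: a_def)
  then have "x = g ! a"
    by (simp add: pre)
  ultimately show thesis
    using that[of a p2] p by (simp add: pre[symmetric])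
qed

lemma detour_if_leaves_cycle:
  assumes "distinct g" "g \<noteq> []" "distinct p" "hd p = hd g" "last p = last g"
    "\<not> walk_arcs p \<subseteq> cycle_arcs g"
  obtains a b q p3 where "detour g p a b q p3"
proof -
  obtain a p2 where p: "a < length g" "p = take (Suc a) g @ p2" "p2 \<noteq> []" "(g ! a, hd p2) \<notin> cycle_arcs g"
    using walk_leaves_cycle_after_prefix[OF assms(1-4,6)] by blast
  have "last p2 \<in> set g"
    using assms(5) p(2,3) assms(2) by simp
  then obtain q y p3 where p2: "p2 = q @ y # p3" "y \<in> set g" "\<forall>z\<in>set q. z \<notin> set g"
    using split_list_first_prop[of p2 "\<lambda>z. z \<in> set g"] p(3) last_in_set by blast
  obtain b where b: "b < length g" "y = g ! b"
    using p2(2) by (metis in_set_conv_nth)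
  have "a < b"
  proof (rule ccontr)
    assume "\<not> a < b"
    then have "g ! b \<in> set (take (Suc a) g)"
      using b(1) by (auto simp: in_set_conv_nth intro!: exI[of _ b])
    then show False
      using assms(3) p(2) p2(1) b(2) by auto
  qed
  have "detour g p a b q p3"
  proof
    show "p = take (Suc a) g @ q @ g ! b # p3"
      using p(2) p2(1) b(2) by simp
    show "set q \<inter> set g = {}"
      using p2(3) by blast
    show "(g ! a, hd (q @ [g ! b])) \<notin> cycle_arcs g"
      using p(4) p2(1) b(2) by (cases q) auto
  qed (use assms \<open>a < b\<close> b in auto)
  with that show thesis .
qed

section \<open>Cycles of G_M and uncrossing\<close>

definition GM_arcs :: "('v \<times> 'v) set \<Rightarrow> ('v \<times> 'v) set \<Rightarrow> ('v \<times> 'v) set" where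
  "GM_arcs E M = {(u, v). arcM E M u v}"

definition cycle_edges :: "('v \<times> 'v) set \<Rightarrow> 'v list \<Rightarrow> ('v \<times> 'v) set" where
  "cycle_edges M vs = case_prod (und M) ` cycle_arcs vs"

lemma finite_cycle_edges [simp]: "finite (cycle_edges M vs)"
  by (simp add: cycle_edges_def cycle_arcs_def)

lemma inj_on_und_GM_arcs: "inj_on (case_prod (und M)) (GM_arcs E M)"
  by (auto simp: inj_on_def GM_arcs_def arcM_def und_def split: if_splits)

lemma cycle_edges_Int:
  assumes "cycle_arcs xs \<subseteq> GM_arcs E M" "cycle_arcs ys \<subseteq> GM_arcs E M"
  shows "cycle_edges M xs \<inter> cycle_edges M ys = case_prod (und M) ` (cycle_arcs xs \<inter> cycle_arcs ys)"
  using inj_on_image_Int[OF inj_on_und_GM_arcs assms] by (simp add: cycle_edges_def)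

lemma dcycle_iff_cycle_edges:
  "dcycle E M C \<longleftrightarrow>
    (\<exists>vs. 2 \<le> length vs \<and> distinct vs \<and> cycle_arcs vs \<subseteq> GM_arcs E M \<and> C = cycle_edges M vs)"
proof -
  have "cycle_arcs vs \<subseteq> GM_arcs E M \<longleftrightarrow> (\<forall>i < length vs. arcM E M (vs ! i) (vs ! ((i + 1) mod length vs)))"
    and "cycle_edges M vs = {und M (vs ! i) (vs ! ((i + 1) mod length vs)) | i. i < length vs}"
    if "2 \<le> length vs" for vs
  proof -
    have "vs \<noteq> []"
      using that by auto
    then show "cycle_arcs vs \<subseteq> GM_arcs E M \<longleftrightarrow> (\<forall>i < length vs. arcM E M (vs ! i) (vs ! ((i + 1) mod length vs)))"
      by (auto simp: cycle_arcs_conv_nth GM_arcs_def)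
    from \<open>vs \<noteq> []\<close> show "cycle_edges M vs = {und M (vs ! i) (vs ! ((i + 1) mod length vs)) | i. i < length vs}"
      by (simp add: cycle_arcs_conv_nth cycle_edges_def setcompr_eq_image image_image)
  qed
  then show ?thesis
    unfolding dcycle_def by (metis (no_types, lifting))
qed

lemma dcycle_cycle_edges:
  "distinct vs \<Longrightarrow> vs \<noteq> [] \<Longrightarrow> hd vs \<noteq> last vs \<Longrightarrow> cycle_arcs vs \<subseteq> GM_arcs E M
    \<Longrightarrow> dcycle E M (cycle_edges M vs)"
  using length_ge_2_if_hd_neq_last by (auto simp: dcycle_iff_cycle_edges)

lemma dpath_walk_edges:
  assumes "2 \<le> length vs" "distinct vs" "walk_arcs vs \<subseteq> GM_arcs E M"
  shows "dpath E M (case_prod (und M) ` walk_arcs vs)"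
  unfolding dpath_def using assms
  by (intro exI[of _ vs]) (auto simp: GM_arcs_def walk_arcs_conv_nth setcompr_eq_image image_image)

lemma card_uncross:
  assumes "finite (C \<union> G)" "Z \<union> D \<subseteq> C \<union> G" "Z \<inter> D \<subseteq> C \<inter> G"
  shows "card Z + card D \<le> card C + card G"
proof -
  have "finite (Z \<union> D)"
    using assms(1,2) by (rule rev_finite_subset)
  then have "card Z + card D = card (Z \<union> D) + card (Z \<inter> D)"
    by (intro card_Un_Int) auto
  also have "\<dots> \<le> card (C \<union> G) + card (C \<inter> G)"
    using assms by (intro add_mono card_mono) auto
  also have "\<dots> = card C + card G"
    using assms(1) by (intro card_Un_Int[symmetric]) auto
  finally show ?thesis .
qed

lemma card_Eplus_uncross:
  assumes "finite (C \<union> G)" "Z \<union> D \<subseteq> C \<union> G" "Z \<inter> D \<subseteq> C \<inter> G"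
  shows "card (Eplus R M Z) + card (Eplus R M D) \<le> card (Eplus R M C) + card (Eplus R M G)"
  unfolding Eplus_def
proof (rule card_uncross)
  show "finite (C \<inter> R - M \<union> (G \<inter> R - M))"
    using assms(1) by (rule rev_finite_subset) blast
qed (use assms in blast)+

context detour
begin

lemma detour_cycle_meets_cycle_in_path:
  assumes "cycle_arcs g \<subseteq> GM_arcs E M" "walk_arcs p \<subseteq> GM_arcs E M"
  shows "dcycle E M (cycle_edges M (detour_cycle g a b q))"
    and "und M (last g) (hd g) \<in> cycle_edges M (detour_cycle g a b q)"
    and "dpath E M (cycle_edges M (detour_cycle g a b q) \<inter> cycle_edges M g)"
proof -
  have arcs: "cycle_arcs (detour_cycle g a b q) \<subseteq> GM_arcs E M"
    using detour_cycle_subset assms by blast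
  have "2 \<le> length (detour_cycle g a b q)"
    using length_drop_take_ge_2 by (simp add: detour_cycle_def)
  with arcs show "dcycle E M (cycle_edges M (detour_cycle g a b q))"
    using distinct_detour_cycle by (auto simp: dcycle_iff_cycle_edges)
  show "und M (last g) (hd g) \<in> cycle_edges M (detour_cycle g a b q)"
    using imageI[OF closing_arc_in_detour_cycle, of "case_prod (und M)"] by (simp add: cycle_edges_def)
  have "distinct (drop b g @ take (Suc a) g)"
    using distinct_detour_cycle by (auto simp: detour_cycle_def)
  moreover have "walk_arcs (drop b g @ take (Suc a) g) \<subseteq> GM_arcs E M"
    using detour_cycle_Int_cycle assms(1) by blast
  ultimately show "dpath E M (cycle_edges M (detour_cycle g a b q) \<inter> cycle_edges M g)"
    using length_drop_take_ge_2 dpath_walk_edges[of "drop b g @ take (Suc a) g" E M]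
    by (simp add: cycle_edges_Int[OF arcs assms(1)] detour_cycle_Int_cycle)
qed

lemma cycle_arcs_subset_shortcut:
  assumes "z \<noteq> []" "hd z = hd g" "last z = last g" "walk_arcs z \<subseteq> walk_arcs (shortcut g b p3)"
  shows "cycle_arcs z \<subseteq> cycle_arcs (shortcut g b p3)"
  using assms shortcut_ends by (intro cycle_arcs_mono[OF assms(4,1) shortcut_ends(1)]) simp_all

lemma card_Eplus_shortcut_detour:
  assumes "cycle_arcs g \<subseteq> GM_arcs E M" "walk_arcs p \<subseteq> GM_arcs E M"
    and z: "z \<noteq> []" "hd z = hd g" "last z = last g" "walk_arcs z \<subseteq> walk_arcs (shortcut g b p3)"
  shows "card (Eplus R M (cycle_edges M z)) + card (Eplus R M (cycle_edges M (detour_cycle g a b q)))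
    \<le> card (Eplus R M (cycle_edges M p)) + card (Eplus R M (cycle_edges M g))"
proof (rule card_Eplus_uncross)
  have z_shortcut: "cycle_arcs z \<subseteq> cycle_arcs (shortcut g b p3)"
    using cycle_arcs_subset_shortcut z .
  have p_arcs: "cycle_arcs p \<subseteq> GM_arcs E M"
    using cycle_arcs_p_subset assms(1,2) by blast
  then have z_arcs: "cycle_arcs z \<subseteq> GM_arcs E M" and d_arcs: "cycle_arcs (detour_cycle g a b q) \<subseteq> GM_arcs E M"
    using z_shortcut uncross_Un assms(1) by blast+
  show "cycle_edges M z \<union> cycle_edges M (detour_cycle g a b q) \<subseteq> cycle_edges M p \<union> cycle_edges M g"
    using z_shortcut uncross_Un unfolding cycle_edges_def by blast
  have "cycle_arcs z \<inter> cycle_arcs (detour_cycle g a b q) \<subseteq> cycle_arcs p \<inter> cycle_arcs g"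
    using z_shortcut uncross_Int by blast
  then show "cycle_edges M z \<inter> cycle_edges M (detour_cycle g a b q) \<subseteq> cycle_edges M p \<inter> cycle_edges M g"
    unfolding cycle_edges_Int[OF z_arcs d_arcs] cycle_edges_Int[OF p_arcs assms(1)] by blast
qed simp

end

locale heavy_cycle =
  fixes E M R :: "('v \<times> 'v) set" and k :: nat and g :: "'v list"
  assumes distinct_g: "distinct g" and length_g: "2 \<le> length g"
    and arcs_g: "cycle_arcs g \<subseteq> GM_arcs E M"
    and positive_g: "0 < wM R M (cycle_edges M g)"
    and card_Eplus_g: "card (Eplus R M (cycle_edges M g)) \<le> k"
    and positive_heavy: "\<And>C. dcycle E M C \<Longrightarrow> 0 < wM R M C \<Longrightarrow> 2 * real k / 3 < real (card (Eplus R M C))"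
    and nonpositive_light: "\<And>C. dcycle E M C \<Longrightarrow> wM R M C \<le> 0 \<Longrightarrow> real (card (Eplus R M C)) < real k / 3"
begin

lemma g_ends: "g \<noteq> []" "hd g \<noteq> last g"
  using distinct_g length_g by (cases g; cases "tl g"; auto)+

lemma shortcut_nonpositive:
  assumes "detour g p a b q p3" "walk_arcs p \<subseteq> GM_arcs E M" "wM R M (cycle_edges M p) \<le> 0"
    and "0 < wM R M (cycle_edges M (detour_cycle g a b q))"
    and z: "distinct z" "z \<noteq> []" "hd z = hd g" "last z = last g" "walk_arcs z \<subseteq> walk_arcs (shortcut g b p3)"
  shows "wM R M (cycle_edges M z) \<le> 0"
proof (rule ccontr)
  interpret detour g p a b q p3 by fact
  assume "\<not> wM R M (cycle_edges M z) \<le> 0"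
  moreover have "cycle_arcs z \<subseteq> GM_arcs E M"
    using cycle_arcs_subset_shortcut[OF z(2-5)] uncross_Un cycle_arcs_p_subset arcs_g assms(2) by blast
  moreover have "hd z \<noteq> last z"
    using z(3,4) g_ends by simp
  ultimately have "2 * real k / 3 < real (card (Eplus R M (cycle_edges M z)))"
    using positive_heavy dcycle_cycle_edges[OF z(1,2)] by simp
  moreover have "2 * real k / 3 < real (card (Eplus R M (cycle_edges M (detour_cycle g a b q))))"
    using positive_heavy detour_cycle_meets_cycle_in_path(1)[OF arcs_g assms(2)] assms(4) by blast
  moreover have "real (card (Eplus R M (cycle_edges M p))) < real k / 3"
  proof (rule nonpositive_light)
    have "cycle_arcs p \<subseteq> GM_arcs E M"
      using cycle_arcs_p_subset arcs_g assms(2) by blast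
    then show "dcycle E M (cycle_edges M p)"
      using dcycle_cycle_edges[OF distinct_p p_ends(1)] p_ends(2) last_p g_ends by simp
  qed fact
  moreover have "card (Eplus R M (cycle_edges M z)) + card (Eplus R M (cycle_edges M (detour_cycle g a b q)))
    \<le> card (Eplus R M (cycle_edges M p)) + card (Eplus R M (cycle_edges M g))"
    using card_Eplus_shortcut_detour arcs_g assms(2) z by blast
  ultimately show False
    using card_Eplus_g by linarith
qed

lemma light_cycle_meeting_cycle_in_path:
  assumes "distinct p" "p \<noteq> []" "hd p = hd g" "last p = last g" "walk_arcs p \<subseteq> GM_arcs E M"
    "wM R M (cycle_edges M p) \<le> 0"
  shows "\<exists>D. dcycle E M D \<and> wM R M D \<le> 0 \<and> und M (last g) (hd g) \<in> D \<and>
    dpath E M (D \<inter> cycle_edges M g)"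
  using assms
proof (induction "card (walk_arcs p - cycle_arcs g)" arbitrary: p rule: less_induct)
  case less
  have "\<not> walk_arcs p \<subseteq> cycle_arcs g"
  proof
    assume "walk_arcs p \<subseteq> cycle_arcs g"
    then have "p = g"
      by (rule distinct_walk_in_cycle_eq[OF distinct_g g_ends(1) less.prems(1-4)])
    with less.prems(6) positive_g show False
      by simp
  qed
  then obtain a b q p3 where "detour g p a b q p3"
    using detour_if_leaves_cycle[OF distinct_g g_ends(1) less.prems(1,3,4)] by blast
  then interpret detour g p a b q p3 .
  let ?D = "cycle_edges M (detour_cycle g a b q)"
  show ?case
  proof (cases "wM R M ?D \<le> 0")
    case True
    then show ?thesis
      using detour_cycle_meets_cycle_in_path[OF arcs_g less.prems(5)] by blast
  next
    case False
    obtain z where z: "distinct z" "z \<noteq> []" "hd z = hd (shortcut g b p3)" "last z = last (shortcut g b p3)"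
      "walk_arcs z \<subseteq> walk_arcs (shortcut g b p3)"
      using distinct_walk_within[OF shortcut_ends(1)] by blast
    note z = z[unfolded shortcut_ends(2,3)]
    have "wM R M (cycle_edges M z) \<le> 0"
      using shortcut_nonpositive \<open>detour g p a b q p3\<close> less.prems(5,6) False z by simp
    moreover have "card (walk_arcs z - cycle_arcs g) < card (walk_arcs p - cycle_arcs g)"
      using shortcut_fewer_arcs_off_cycle z(5) by (intro psubset_card_mono) auto
    moreover have "walk_arcs z \<subseteq> GM_arcs E M"
      using z(5) shortcut_subset arcs_g less.prems(5) by blast
    ultimately show ?thesis
      using less.hyps z by blast
  qed
qed

end

section \<open>Alternating cycles of two perfect matchings\<close>

lemma perfect_matching_subset: "perfect_matching A B E M \<Longrightarrow> E \<subseteq> A \<times> B \<Longrightarrow> M \<subseteq> A \<times> B"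
  unfolding perfect_matching_def by blast

definition mate :: "('a \<times> 'b) set \<Rightarrow> 'a \<Rightarrow> 'b" where
  "mate M a = (THE b. (a, b) \<in> M)"

lemma mate_eq:
  assumes "perfect_matching A B E M" "E \<subseteq> A \<times> B" "(a, b) \<in> M"
  shows "mate M a = b"
proof -
  have "a \<in> A"
    using assms perfect_matching_subset by blast
  with assms(1) have "\<exists>!b. (a, b) \<in> M"
    by (simp add: perfect_matching_def)
  then show ?thesis
    unfolding mate_def using assms(3) by (rule the1_equality)
qed

lemma mate_converse_eq:
  assumes "perfect_matching A B E M" "E \<subseteq> A \<times> B" "(a, b) \<in> M"
  shows "mate (M\<inverse>) b = a"
proof -
  have "b \<in> B"
    using assms perfect_matching_subset by blast
  with assms(1) have "\<exists>!a. (b, a) \<in> M\<inverse>"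
    by (simp add: perfect_matching_def)
  then show ?thesis
    unfolding mate_def by (rule the1_equality) (simp add: assms(3))
qed

lemma mate_in:
  assumes "perfect_matching A B E M" "a \<in> A"
  shows "(a, mate M a) \<in> M"
proof -
  have "\<exists>!b. (a, b) \<in> M"
    using assms by (simp add: perfect_matching_def)
  then show ?thesis
    unfolding mate_def by (rule theI')
qed

lemma mate_converse_in:
  assumes "perfect_matching A B E M" "b \<in> B"
  shows "(mate (M\<inverse>) b, b) \<in> M"
proof -
  have "\<exists>!a. (b, a) \<in> M\<inverse>"
    using assms by (simp add: perfect_matching_def)
  then have "(b, mate (M\<inverse>) b) \<in> M\<inverse>"
    unfolding mate_def by (rule theI')
  then show ?thesis
    by simp
qed

(* The orbits of exchange A M N are the A-sides of the alternating cycles of M \<union> N. *)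
definition exchange :: "'a set \<Rightarrow> ('a \<times> 'b) set \<Rightarrow> ('a \<times> 'b) set \<Rightarrow> 'a \<Rightarrow> 'a" where
  "exchange A M N a = (if a \<in> A then mate (N\<inverse>) (mate M a) else a)"

lemma exchange_in:
  assumes M: "perfect_matching A B E M" and N: "perfect_matching A B E N"
    and EAB: "E \<subseteq> A \<times> B" and "a \<in> A"
  shows "(exchange A M N a, mate M a) \<in> N"
proof -
  have "mate M a \<in> B"
    using mate_in[OF M \<open>a \<in> A\<close>] perfect_matching_subset[OF M EAB] by blast
  with \<open>a \<in> A\<close> show ?thesis
    using mate_converse_in[OF N] by (simp add: exchange_def)
qed

lemma exchange_permutes:
  assumes M: "perfect_matching A B E M" and N: "perfect_matching A B E N"
    and EAB: "E \<subseteq> A \<times> B" and "finite A"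
  shows "exchange A M N permutes A"
proof -
  have maps: "exchange A M N a \<in> A" if "a \<in> A" for a
    using SigmaD1[OF subsetD[OF perfect_matching_subset[OF N EAB] exchange_in[OF M N EAB that]]] .
  have inj: "inj_on (exchange A M N) A"
  proof (rule inj_onI)
    fix a a'
    assume a: "a \<in> A" "a' \<in> A" and eq: "exchange A M N a = exchange A M N a'"
    have "mate M a = mate N (exchange A M N a)"
      by (rule mate_eq[OF N EAB exchange_in[OF M N EAB a(1)], symmetric])
    also have "\<dots> = mate M a'"
      unfolding eq by (rule mate_eq[OF N EAB exchange_in[OF M N EAB a(2)]])
    finally have "mate M a = mate M a'" .
    have "a = mate (M\<inverse>) (mate M a)"
      by (rule mate_converse_eq[OF M EAB mate_in[OF M a(1)], symmetric])
    also have "\<dots> = a'"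
      unfolding \<open>mate M a = mate M a'\<close> by (rule mate_converse_eq[OF M EAB mate_in[OF M a(2)]])
    finally show "a = a'" .
  qed
  moreover have "exchange A M N a = a" if "a \<notin> A" for a
    using that by (simp add: exchange_def)
  ultimately show ?thesis
    using inj_imp_permutes[of "exchange A M N" A] \<open>finite A\<close> maps by blast
qed

lemma exchange_orbit_moves:
  assumes M: "perfect_matching A B E M" and N: "perfect_matching A B E N"
    and EAB: "E \<subseteq> A \<times> B" and "finite A" and ht: "(h, t) \<in> N - M"
  shows "exchange A M N ((exchange A M N ^^ i) h) \<noteq> (exchange A M N ^^ i) h"
proof
  let ?f = "exchange A M N"
  have hA: "h \<in> A"
    using ht perfect_matching_subset[OF N EAB] by blast
  assume "?f ((?f ^^ i) h) = (?f ^^ i) h"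
  then have "(?f ^^ i) (?f h) = (?f ^^ i) h"
    by (simp add: funpow_swap1)
  then have "?f h = h"
    using inj_fn[OF permutes_inj[OF exchange_permutes[OF M N EAB \<open>finite A\<close>]]] by (simp add: inj_eq)
  then have "mate M h = t"
    using mate_eq[OF N EAB exchange_in[OF M N EAB hA]] mate_eq[OF N EAB] ht by auto
  then show False
    using mate_in[OF M hA] ht by simp
qed

lemma zigzag_walk:
  assumes "\<And>i. (F i, G i) \<in> S" "\<And>i. (G i, F (Suc i)) \<in> S"
  obtains ws where "ws \<noteq> []" "hd ws = F 0" "last ws = G j" "walk_arcs ws \<subseteq> S"
proof -
  have "\<exists>ws. ws \<noteq> [] \<and> hd ws = F 0 \<and> last ws = G j \<and> walk_arcs ws \<subseteq> S"
  proof (induction j)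
    case 0
    show ?case
      using assms(1)[of 0] by (intro exI[of _ "[F 0, G 0]"]) simp
  next
    case (Suc j)
    then obtain ws where ws: "ws \<noteq> []" "hd ws = F 0" "last ws = G j" "walk_arcs ws \<subseteq> S"
      by blast
    have "walk_arcs (ws @ [F (Suc j), G (Suc j)]) = insert (G j, F (Suc j)) (walk_arcs ws) \<union> {(F (Suc j), G (Suc j))}"
      using walk_arcs_append[of ws "F (Suc j)" "[G (Suc j)]"] ws(1,3) by (simp add: walk_arcs_snoc)
    with ws assms show ?case
      by (intro exI[of _ "ws @ [F (Suc j), G (Suc j)]"]) auto
  qed
  with that show thesis
    by blast
qed

lemma alternating_path:
  assumes M: "perfect_matching A B E M" and N: "perfect_matching A B E N"
    and EAB: "E \<subseteq> A \<times> B" and "finite A" and ht: "(h, t) \<in> N - M"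
  obtains p where "distinct p" "p \<noteq> []" "hd p = h" "last p = t" "walk_arcs p \<subseteq> GM_arcs E M"
    "case_prod (und M) ` walk_arcs p \<subseteq> M \<union> N"
proof -
  define f where "f = exchange A M N"
  define S where "S = {\<alpha> \<in> GM_arcs E M. case_prod (und M) \<alpha> \<in> M \<union> N}"
  have perm: "f permutes A"
    unfolding f_def using exchange_permutes[OF M N EAB \<open>finite A\<close>] .
  have orbit: "(f ^^ i) h \<in> A" for i
    using permutes_in_image[OF permutes_funpow[OF perm]] ht perfect_matching_subset[OF N EAB] by blast
  have M_arc: "(a, mate M a) \<in> S" if "a \<in> A" for a
    using mate_in[OF M that] by (simp add: S_def GM_arcs_def arcM_def und_def)
  have N_arc: "(mate M ((f ^^ i) h), f ((f ^^ i) h)) \<in> S" for i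
  proof -
    have N_edge: "(f ((f ^^ i) h), mate M ((f ^^ i) h)) \<in> N"
      unfolding f_def using exchange_in[OF M N EAB orbit[unfolded f_def]] .
    then have "(f ((f ^^ i) h), mate M ((f ^^ i) h)) \<notin> M"
      using mate_converse_eq[OF M EAB] mate_in[OF M orbit] exchange_orbit_moves[OF M N EAB \<open>finite A\<close> ht]
      unfolding f_def by metis
    moreover have "N \<subseteq> E"
      using N by (simp add: perfect_matching_def)
    ultimately show ?thesis
      using N_edge by (auto simp: S_def GM_arcs_def arcM_def und_def)
  qed
  obtain n where n: "f ^^ n = id" "0 < n"
    using permutation_is_nilpotent perm \<open>finite A\<close> permutation_permutes by blast
  obtain ws where ws: "ws \<noteq> []" "hd ws = h" "last ws = mate M ((f ^^ (n - 1)) h)" "walk_arcs ws \<subseteq> S"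
    using zigzag_walk[of "\<lambda>i. (f ^^ i) h" "\<lambda>i. mate M ((f ^^ i) h)" S "n - 1"] M_arc N_arc orbit
    by auto
  have "f ((f ^^ (n - 1)) h) = h"
    using n by (metis Suc_diff_1 funpow.simps(2) id_apply o_apply)
  then have "last ws = t"
    using ws(3) mate_eq[OF N EAB exchange_in[OF M N EAB orbit]] mate_eq[OF N EAB] ht
    unfolding f_def by (metis DiffD1)
  then obtain p where "distinct p" "p \<noteq> []" "hd p = h" "last p = t" "walk_arcs p \<subseteq> S"
    using distinct_walk_within[OF ws(1)] ws by (metis subset_trans)
  with that show thesis
    by (auto simp: S_def)
qed

section \<open>Critical tuples\<close>

lemma min_red_attained:
  assumes "finite E" "perfect_matching A B E M" "e \<in> M"
  obtains N where "perfect_matching A B E N" "e \<in> N" "card (N \<inter> R) = min_red A B E R e"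
proof -
  let ?S = "{card (M' \<inter> R) | M'. perfect_matching A B E M' \<and> e \<in> M'}"
  have "?S \<subseteq> {..card E}"
    using assms(1) by (auto simp: perfect_matching_def intro!: card_mono)
  then have "finite ?S"
    by (rule finite_subset) simp
  moreover have "?S \<noteq> {}"
    using assms(2,3) by blast
  ultimately have "min_red A B E R e \<in> ?S"
    unfolding min_red_def by (rule Min_in)
  then obtain N where "perfect_matching A B E N" "e \<in> N" "min_red A B E R e = card (N \<inter> R)"
    by blast
  with that show thesis
    by simp
qed

lemma light_cycle_through_edge:
  assumes crit: "critical A B E R k Mstar M" and e: "(h, t) \<in> (Mstar - M) \<inter> R"
  obtains p where "distinct p" "p \<noteq> []" "hd p = h" "last p = t" "walk_arcs p \<subseteq> GM_arcs E M"
    "wM R M (cycle_edges M p) \<le> 0"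
proof -
  from crit have finA: "finite A" and disj: "A \<inter> B = {}" and EAB: "E \<subseteq> A \<times> B"
    and Mstar: "perfect_matching A B E Mstar" and M: "perfect_matching A B E M"
    and heavy: "\<And>C. dcycle E M C \<Longrightarrow> 0 < wM R M C \<Longrightarrow> 2 * real k / 3 < real (card (Eplus R M C))"
    and light: "real (min_red A B E R (h, t)) < real k / 3"
    using e by (auto simp: critical_def bip_graph_def)
  have "finite E"
    using crit finite_subset[OF EAB] by (simp add: critical_def bip_graph_def)
  then obtain N where N: "perfect_matching A B E N" "(h, t) \<in> N" "card (N \<inter> R) = min_red A B E R (h, t)"
    using min_red_attained[OF _ Mstar] e by blast
  obtain p where p: "distinct p" "p \<noteq> []" "hd p = h" "last p = t" "walk_arcs p \<subseteq> GM_arcs E M"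
    "case_prod (und M) ` walk_arcs p \<subseteq> M \<union> N"
    using alternating_path[OF M N(1) EAB finA] N(2) e by blast
  have "h \<in> A" "t \<in> B"
    using N(2) perfect_matching_subset[OF N(1) EAB] by auto
  then have "h \<noteq> t" "(t, h) \<notin> M"
    using disj perfect_matching_subset[OF M EAB] by auto
  moreover have "N \<subseteq> E"
    using N(1) unfolding perfect_matching_def by blast
  then have "(h, t) \<in> E" "(h, t) \<notin> M"
    using N(2) e by auto
  ultimately have closing: "(t, h) \<in> GM_arcs E M" "case_prod (und M) (t, h) \<in> N"
    using N(2) by (simp_all add: GM_arcs_def arcM_def und_def)
  have arcs: "cycle_arcs p = insert (t, h) (walk_arcs p)"
    using p(2-4) by (simp add: cycle_arcs_eq_insert)
  have "dcycle E M (cycle_edges M p)"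
    using dcycle_cycle_edges[OF p(1,2)] p(3-5) closing(1) \<open>h \<noteq> t\<close> arcs by simp
  moreover have "Eplus R M (cycle_edges M p) \<subseteq> N \<inter> R"
    using p(6) closing(2) arcs by (auto simp: Eplus_def cycle_edges_def)
  then have "card (Eplus R M (cycle_edges M p)) \<le> card (N \<inter> R)"
    using \<open>N \<subseteq> E\<close> \<open>finite E\<close> by (intro card_mono) (auto intro: finite_subset)
  ultimately have "\<not> 0 < wM R M (cycle_edges M p)"
    using heavy light N(3) by fastforce
  with p(1-5) that show thesis
    by simp
qed

lemma heavy_cycle_if_critical:
  assumes crit: "critical A B E R k Mstar M"
    and g: "distinct g" "2 \<le> length g" "cycle_arcs g \<subseteq> GM_arcs E M"
    and sym_diff: "cycle_edges M g \<subseteq> (M - Mstar) \<union> (Mstar - M)" and pos: "0 < wM R M (cycle_edges M g)"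
  shows "heavy_cycle E M R k g"
proof
  from crit have "finite E" and "Mstar \<subseteq> E" "M \<subseteq> E" and k: "card (Mstar \<inter> R) = k"
    and light: "real (card (M \<inter> R)) < real k / 3"
    by (auto simp: critical_def bip_graph_def perfect_matching_def intro: finite_subset)
  then have "finite (Mstar \<inter> R)" "finite M"
    by (auto intro: finite_subset)
  have "Eplus R M (cycle_edges M g) \<subseteq> Mstar \<inter> R"
    using sym_diff by (auto simp: Eplus_def)
  then show "card (Eplus R M (cycle_edges M g)) \<le> k"
    using card_mono[OF \<open>finite (Mstar \<inter> R)\<close>] k by blast
  show "2 * real k / 3 < real (card (Eplus R M C))" if "dcycle E M C" "0 < wM R M C" for C
    using crit that by (auto simp: critical_def)
  show "real (card (Eplus R M C)) < real k / 3" if "wM R M C \<le> 0" for C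
  proof -
    have "card (Eplus R M C) \<le> card (Eminus R M C)"
      using that by (simp add: wM_def)
    also have "\<dots> \<le> card (M \<inter> R)"
      using \<open>finite M\<close> by (intro card_mono) (auto simp: Eminus_def)
    finally show ?thesis
      using light by linarith
  qed
qed (use g pos in simp_all)

lemma light_cycle_covering_edge:
  assumes crit: "critical A B E R k Mstar M" and "dcycle E M Cplus"
    and sym_diff: "Cplus \<subseteq> (M - Mstar) \<union> (Mstar - M)" and pos: "0 < wM R M Cplus"
    and e: "e \<in> Eplus R M Cplus"
  shows "\<exists>D. dcycle E M D \<and> wM R M D \<le> 0 \<and> e \<in> D \<and> dpath E M (D \<inter> Cplus)"
proof -
  obtain g0 where g0: "2 \<le> length g0" "distinct g0" "cycle_arcs g0 \<subseteq> GM_arcs E M" "Cplus = cycle_edges M g0"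
    using \<open>dcycle E M Cplus\<close> by (auto simp: dcycle_iff_cycle_edges)
  from e g0(4) obtain t h where th: "(t, h) \<in> cycle_arcs g0" "e = und M t h"
    by (auto simp: Eplus_def cycle_edges_def)
  obtain g where g: "distinct g" "length g = length g0" "hd g = h" "cycle_arcs g = cycle_arcs g0"
    using rotate_cycle_to[OF g0(2)] cycle_arcs_in_set[OF th(1)] by blast
  have t: "t = last g"
    using cycle_arcs_into_hd[OF g(1)] th(1) g(3,4) by simp
  have "(t, h) \<notin> M"
    using e th(2) by (auto simp: Eplus_def und_def)
  then have "e = (h, t)"
    using th(2) by (simp add: und_def)
  then have "(h, t) \<in> (Mstar - M) \<inter> R"
    using e sym_diff by (auto simp: Eplus_def)
  then obtain p where p: "distinct p" "p \<noteq> []" "hd p = h" "last p = t" "walk_arcs p \<subseteq> GM_arcs E M"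
    "wM R M (cycle_edges M p) \<le> 0"
    using light_cycle_through_edge[OF crit] by blast
  have Cplus: "Cplus = cycle_edges M g"
    using g(4) g0(4) by (simp add: cycle_edges_def)
  interpret heavy_cycle E M R k g
    using heavy_cycle_if_critical[OF crit g(1)] g(2,4) g0(1,3) sym_diff pos Cplus by simp
  have "e = und M (last g) (hd g)"
    using th(2) t g(3) by simp
  then show ?thesis
    using light_cycle_meeting_cycle_in_path[OF p(1,2)] p(3-6) g(3) t Cplus by simp
qed

theorem lemma7:
  fixes A B :: "'v set" and E R Mstar M Cplus :: "('v \<times> 'v) set" and k :: nat
  assumes "critical A B E R k Mstar M"
    and "dcycle E M Cplus" and "Cplus \<subseteq> (M - Mstar) \<union> (Mstar - M)" and "wM R M Cplus > 0"
    and "\<forall>C. dcycle E M C \<and> C \<subseteq> (M - Mstar) \<union> (Mstar - M) \<and> wM R M C > 0 \<longrightarrow> C = Cplus"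
  shows "\<exists>\<C>. (\<forall>C\<in>\<C>. dcycle E M C \<and> wM R M C \<le> 0) \<and>
             (\<forall>e\<in>Eplus R M Cplus. \<exists>C\<in>\<C>. e \<in> C) \<and>
             (\<forall>C\<in>\<C>. dpath E M (C \<inter> Cplus))"
proof -
  have "\<exists>D. dcycle E M D \<and> wM R M D \<le> 0 \<and> e \<in> D \<and> dpath E M (D \<inter> Cplus)"
    if "e \<in> Eplus R M Cplus" for e
    using light_cycle_covering_edge[OF assms(1-4) that] .
  then show ?thesis
    by (intro exI[of _ "{D. dcycle E M D \<and> wM R M D \<le> 0 \<and> dpath E M (D \<inter> Cplus)}"]) blast
qed

end
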